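(* Let $B=F(b_1,\ldots,b_n)$ be a Ferrers board with $0\le b_1\le\cdots\le b_n$ and $b_n>0$, and let $B^-=F(b_1,\ldots,b_{n-1})$. Then for all $1\le k\le n$, $$\mathbf{rPT}_k(B,p,q,r)=\mathbf{rPT}_k(B^-,p,q,r)+P_{b_{n-(k-1)}}(p,q,r)\,\mathbf{rPT}_{k-1}(B^-,p,q,r).$$
   Context: For $m\ge1$, a $P$-tiling of height $m$ is a tiling of a column of height $m$ by tiles of heights 1, 2 and 3 whose bottom-most tile has height 1. $P_m(p,q,r)=\sum_T q^{\mathrm{one}(T)}p^{\mathrm{two}(T)}r^{\mathrm{three}(T)}$ over all $P$-tilings $T$ of height $m$, where $\mathrm{one},\mathrm{two},\mathrm{three}$ count tiles of height 1, 2, 3. There are no $P$-tilings of height 0 and $P_0(p,q,r)=0$. A Ferrers board $F(b_1,\ldots,b_n)$ has column heights $b_1,\ldots,b_n$ from left to right. A $P$-rook placement of $k$ tilings in $B=F(b_1,\ldots,b_n)$ is a choice of columns $1\le i_1<\cdots<i_k\le n$ with, for each $s=1,\ldots,k$, a $P$-tiling of height $b_{i_s-(s-1)}$ in column $i_s$ (the number of cells of column $i_s$ left uncanceled by the tilings in earlier columns, each tiling canceling top cells of columns to its right so that after $s$ tilings the untiled columns have $b_1,\ldots,b_{n-s}$ uncanceled cells). Its weight is $q^ap^br^c$ with $a,b,c$ the total numbers of tiles of height 1, 2, 3 used. $\mathbf{rPT}_k(B,p,q,r)$ is the sum of the weights of all $P$-rook placements of $k$ tilings in $B$ (the empty placement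 has weight 1; the sum is 0 if there are none). *)

theory Defs
  imports Main
begin

text \<open>A tiling of a column is the list of tile heights listed from bottom to top.
  A P-tiling of height m: all tiles of height 1, 2 or 3, total height m, bottom-most tile has height 1.\<close>
definition is_Ptiling :: "nat \<Rightarrow> nat list \<Rightarrow> bool" where
  "is_Ptiling m T \<longleftrightarrow> set T \<subseteq> {1,2,3} \<and> sum_list T = m \<and> T \<noteq> [] \<and> hd T = 1"

definition tiling_weight :: "'a::comm_semiring_1 \<Rightarrow> 'a \<Rightarrow> 'a \<Rightarrow> nat list \<Rightarrow> 'a" where
  "tiling_weight p q r T = q ^ count_list T 1 * p ^ count_list T 2 * r ^ count_list T 3"

definition Ptil :: "nat \<Rightarrow> 'a::comm_semiring_1 \<Rightarrow> 'a \<Rightarrow> 'a \<Rightarrow> 'a" where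
  "Ptil m p q r = (\<Sum>T\<in>{T. is_Ptiling m T}. tiling_weight p q r T)"

text \<open>Board F(b_1,...,b_n) given as the list bs = [b_1,...,b_n]; column j (1-based) has height bs!(j-1).
  A P-rook placement of k tilings is a list of pairs (i_s, T_s), s = 1..k, with columns
  1 \<le> i_1 < ... < i_k \<le> n and T_s a P-tiling of height b_{i_s-(s-1)}.
  (0-based list index s0 = s-1, so the height is b_{i - s0} = bs!(i - s0 - 1).)\<close>
definition Prook_placements :: "nat \<Rightarrow> nat list \<Rightarrow> (nat \<times> nat list) list set" where
  "Prook_placements k bs = {pl. length pl = k \<and> sorted_wrt (<) (map fst pl) \<and>
     (\<forall>s<k. 1 \<le> fst (pl!s) \<and> fst (pl!s) \<le> length bs \<and>
        is_Ptiling (bs ! (fst (pl!s) - s - 1)) (snd (pl!s)))}"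

definition placement_weight :: "'a::comm_semiring_1 \<Rightarrow> 'a \<Rightarrow> 'a \<Rightarrow> (nat \<times> nat list) list \<Rightarrow> 'a" where
  "placement_weight p q r pl = tiling_weight p q r (concat (map snd pl))"

definition rPT :: "nat \<Rightarrow> nat list \<Rightarrow> 'a::comm_semiring_1 \<Rightarrow> 'a \<Rightarrow> 'a \<Rightarrow> 'a" where
  "rPT k bs p q r = (\<Sum>pl\<in>Prook_placements k bs. placement_weight p q r pl)"

end

theory Submission
  imports Defs
begin

text \<open>Split the placements of \<open>k\<close> tilings in \<open>B\<close> according to whether column \<open>n\<close> carries a
  tiling. Those avoiding it are exactly the placements in \<open>B\<^sup>-\<close>. Those using it are a
  placement of \<open>k - 1\<close> tilings in \<open>B\<^sup>-\<close> followed by a tiling of column \<open>n\<close>, which as the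
  \<open>k\<close>-th tiling has height \<open>b_{n-(k-1)}\<close>; as weights multiply under concatenation, these
  contribute \<open>P_{b_{n-(k-1)}} \<cdot> rPT_{k-1}(B\<^sup>-)\<close>.\<close>

lemma tiling_weight_append:
  "tiling_weight p q r (xs @ ys) = tiling_weight p q r xs * tiling_weight p q r ys"
  by (simp add: tiling_weight_def power_add algebra_simps)

lemma length_le_sum_list_pos:
  fixes xs :: "nat list"
  assumes "0 \<notin> set xs"
  shows "length xs \<le> sum_list xs"
  using assms by (induction xs) (auto simp: Suc_le_eq)

lemma Ptiling_length_le: "is_Ptiling m T \<Longrightarrow> length T \<le> m"
  unfolding is_Ptiling_def by (auto intro!: length_le_sum_list_pos)

lemma finite_Prook_placements: "finite (Prook_placements k bs)"
proof (rule finite_subset)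
  define A where "A = {1..length bs} \<times> {T. set T \<subseteq> {1,2,3::nat} \<and> length T \<le> sum_list bs}"
  show "Prook_placements k bs \<subseteq> {pl. set pl \<subseteq> A \<and> length pl \<le> k}"
  proof safe
    fix pl x assume pl: "pl \<in> Prook_placements k bs" and "x \<in> set pl"
    then obtain s where s: "s < k" "x = pl ! s"
      by (auto simp: Prook_placements_def in_set_conv_nth)
    with pl have col: "1 \<le> fst x" "fst x \<le> length bs"
      and til: "is_Ptiling (bs ! (fst x - s - 1)) (snd x)"
      by (auto simp: Prook_placements_def)
    have "length (snd x) \<le> bs ! (fst x - s - 1)"
      using til by (rule Ptiling_length_le)
    also have "\<dots> \<le> sum_list bs"
      using col by (intro elem_le_sum_list) auto
    finally show "x \<in> A"
      using col til by (cases x) (auto simp: A_def is_Ptiling_def)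
  qed (simp add: Prook_placements_def)
  show "finite {pl. set pl \<subseteq> A \<and> length pl \<le> k}"
    by (rule finite_lists_length_le) (simp add: A_def finite_lists_length_le)
qed

text \<open>A tiling in column \<open>i\<close> only reads heights of columns \<open>\<le> i\<close>.\<close>
lemma Prook_placements_take:
  "Prook_placements k (take m bs) = Prook_placements k bs \<inter> {pl. \<forall>x\<in>set pl. fst x \<le> m}"
proof (intro set_eqI iffI)
  fix pl assume "pl \<in> Prook_placements k bs \<inter> {pl. \<forall>x\<in>set pl. fst x \<le> m}"
  then have "\<forall>s<k. fst (pl ! s) \<le> m" and "pl \<in> Prook_placements k bs"
    by (auto simp: Prook_placements_def)
  then show "pl \<in> Prook_placements k (take m bs)"
    by (fastforce simp: Prook_placements_def)
qed (fastforce simp: Prook_placements_def in_set_conv_nth)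

lemma Prook_placements_snoc:
  "pl @ [(i, T)] \<in> Prook_placements (Suc k) bs \<longleftrightarrow>
     pl \<in> Prook_placements k bs \<and> (\<forall>x\<in>set pl. fst x < i) \<and>
     1 \<le> i \<and> i \<le> length bs \<and> is_Ptiling (bs ! (i - k - 1)) T"
  by (auto simp: Prook_placements_def sorted_wrt_append nth_append less_Suc_eq
      dest: spec[of _ k])

lemma Prook_placements_butlast:
  "Prook_placements k (butlast bs) =
     Prook_placements k bs \<inter> {pl. \<forall>x\<in>set pl. fst x < length bs}"
  unfolding butlast_conv_take Prook_placements_take
  by (fastforce simp: Prook_placements_def in_set_conv_nth)

lemma Prook_placements_last_column:
  assumes "bs \<noteq> []"
  shows "Prook_placements (Suc k) bs - {pl. \<forall>x\<in>set pl. fst x < length bs} =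
           (\<lambda>(pl, T). pl @ [(length bs, T)]) `
             (Prook_placements k (butlast bs) \<times> {T. is_Ptiling (bs ! (length bs - Suc k)) T})"
    (is "?L = ?f ` (?P \<times> ?T)")
proof (intro set_eqI iffI)
  fix pl assume pl: "pl \<in> ?L"
  then have "pl \<noteq> []" by (auto simp: Prook_placements_def)
  then obtain pl' i T where pl_eq: "pl = pl' @ [(i, T)]"
    by (metis prod.exhaust rev_exhaust)
  with pl have pl': "pl' \<in> Prook_placements k bs" "\<forall>x\<in>set pl'. fst x < i"
    and i: "i \<le> length bs" and T: "is_Ptiling (bs ! (i - k - 1)) T"
    by (auto simp: Prook_placements_snoc)
  from pl pl_eq pl'(2) i have "i = length bs" by fastforce
  with pl' T show "pl \<in> ?f ` (?P \<times> ?T)"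
    unfolding pl_eq Prook_placements_butlast by force
next
  fix pl assume "pl \<in> ?f ` (?P \<times> ?T)"
  then obtain pl' T where pl_eq: "pl = pl' @ [(length bs, T)]"
    and pl': "pl' \<in> ?P" and T: "T \<in> ?T"
    by auto
  with assms show "pl \<in> ?L"
    by (auto simp: Prook_placements_snoc Prook_placements_butlast Suc_le_eq)
qed

theorem theorem7:
  fixes bs :: "nat list" and k :: nat and p q r :: "'a::comm_semiring_1"
  assumes "sorted bs" and "bs \<noteq> []" and "last bs > 0"
    and "1 \<le> k" and "k \<le> length bs"
  shows "rPT k bs p q r =
           rPT k (butlast bs) p q r
           + Ptil (bs ! (length bs - k)) p q r * rPT (k - 1) (butlast bs) p q r"
proof -
  \<comment> \<open>Only \<open>bs \<noteq> []\<close> and \<open>1 \<le> k\<close> are needed: the decomposition by whether the last column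
    carries a tiling is purely combinatorial and does not use the shape of the board.\<close>
  define w where "w = placement_weight p q r"
  define S where "S = Prook_placements k bs"
  define avoid_last where "avoid_last = {pl. \<forall>x\<in>set pl. fst (x :: nat \<times> nat list) < length bs}"
  define P' where "P' = Prook_placements (k - 1) (butlast bs)"
  define TT where "TT = {T. is_Ptiling (bs ! (length bs - k)) T}"
  have k: "k = Suc (k - 1)" using assms(4) by simp
  have "rPT k bs p q r = sum w (S \<inter> avoid_last) + sum w (S - avoid_last)"
    unfolding rPT_def w_def S_def by (rule sum.Int_Diff) (rule finite_Prook_placements)
  also have "S \<inter> avoid_last = Prook_placements k (butlast bs)"
    by (simp add: S_def avoid_last_def Prook_placements_butlast)
  also have "S - avoid_last = (\<lambda>(pl, T). pl @ [(length bs, T)]) ` (P' \<times> TT)"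
    using Prook_placements_last_column[OF assms(2), of "k - 1", folded k]
    by (simp only: S_def avoid_last_def P'_def TT_def)
  also have "sum w \<dots> = (\<Sum>(pl, T)\<in>P' \<times> TT. w pl * tiling_weight p q r T)"
    by (subst sum.reindex)
       (auto intro!: inj_onI sum.cong simp: w_def placement_weight_def tiling_weight_append)
  also have "\<dots> = Ptil (bs ! (length bs - k)) p q r * rPT (k - 1) (butlast bs) p q r"
    by (simp add: sum.cartesian_product[symmetric] sum_product mult.commute
        Ptil_def rPT_def w_def P'_def TT_def)
  finally show ?thesis by (simp add: rPT_def w_def)
qed

end
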